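(* Let $N\ge 4$ and let $l,r$ be positive integers with $2\le l+r\le N-2$. Let $\hat O\in V_{\mathcal N}$ be $(l,r)$-invertible. Let $\hat X_i\in V_{\{i\}}$ for $i=1,\dots,N$ be arbitrary. Define operators $\hat Y_k\in V_{\{k+1,\dots,k+r\}}$, $k=N-r,N-r-1,\dots,l$, recursively by $\hat Y_{N-r}=\hat X_{N-r+1}\cdots\hat X_N$ and $$\hat Y_{k-1}=\bar E_{\{k-l,\dots,k-1\}}^{\{k,\dots,k+r-1\}}\Bigl(E_{\{k-l,\dots,k-1\}}^{\{k,\dots,k+r\}}(\hat X_k\hat Y_k)\Bigr),\qquad k=N-r,N-r-1,\dots,l+1,$$ where $\bar E$ denotes the Moore–Penrose pseudoinverse of the linear map $E$. Then $$\mathrm{tr}\bigl[\hat X_1\cdots\hat X_N\,\hat O\bigr]=\mathrm{tr}\bigl[\hat X_1\cdots\hat X_l\,\hat Y_l\,\hat O\bigr].$$ In particular (taking the $\hat X_i$ to run over basis operators $\hat P_i^{(\alpha_i)}$), an $(l,r)$-invertible $\hat O$ is completely determined by its reductions $\mathrm{tr}_{\mathcal N\setminus\{k,\dots,k+R-1\}}[\hat O]$, $k=1,\dots,N-R+1$, to all blocks of $R=l+r+1$ contiguous sites.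
   Context: Consider $N$ sites $\mathcal N=\{1,\dots,N\}$, each carrying $\mathbb C^d$; the total Hilbert space is $(\mathbb C^d)^{\otimes N}$. For each site $i$ let $\{\hat P_i^{(\alpha)}\}_{\alpha=1,\dots,d^2}$ be a basis of the operators on site $i$, orthonormal with respect to the Hilbert–Schmidt inner product $\langle A,B\rangle=\mathrm{tr}[A^\dagger B]$. For $\mathcal I\subset\mathcal N$, $V_{\mathcal I}$ is the complex vector space spanned by the products $\prod_{i\in\mathcal I}\hat P_i^{(\alpha_i)}$ (i.e. the operators acting on the sites in $\mathcal I$), equipped with the Hilbert–Schmidt inner product; an operator in $V_{\mathcal I}$ is identified with its tensor product with the identity on the remaining sites, and products of operators on disjoint site sets are tensor products. $\mathrm{tr}_{\mathcal S}$ denotes the partial trace over the sites in $\mathcal S$. For fixed $\hat O\in V_{\mathcal N}$ and $\mathcal I,\mathcal J\subset\mathcal N$ (with $\mathcal I\cup\mathcal J$ a contiguous set of sites and $\mathcal I\cap\mathcal J=\emptyset$), the linear map $E_{\mathcal I}^{\mathcal J}:V_{\mathcal J}\to V_{\mathcal I}$ is $E_{\mathcal I}^{\mathcal J}(\hat X)=\mathrm{tr}_{\mathcal N\setminus\mathcal I}[\hat X\hat O]$; equivalently $E_{\mathcal I}^{\mathcal J}(\hat X)=\mathrm{tr}_{\mathcal J}[\hat X\hat O_{\mathcal I\cup\mathcal J}]$ with $\hat O_{\mathcal I\cup\mathcal J}=\mathrm{tr}_{\mathcal N\setminus(\mathcal I\cup\mathcal J)}[\hat O]$. Definition ($(l,r)$-invertibility):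 for positive integers $l,r$ with $2\le l+r\le N-2$, $\hat O$ is called $(l,r)$-invertible if for every integer $k$ with $l\le k\le N-r-1$, $$\mathrm{rank}\bigl[E_{\{k-l+1,\dots,k\}}^{\{k+1,\dots,k+r\}}\bigr]=\mathrm{rank}\bigl[E_{\{1,\dots,k\}}^{\{k+1,\dots,N\}}\bigr].$$ *)

theory Defs
  imports Complex_Main "HOL-Library.Function_Algebras"
begin

text \<open>Sites are natural numbers; the chain is the set of sites 1..N, each carrying C^d.
  A basis configuration of a site set S is a function s :: nat => nat with s i < d on S
  and s i = 0 off S.  An operator on S is a matrix indexed by configurations of S,
  i.e. a function cfg => cfg => complex that vanishes off (cfgs d S) x (cfgs d S).\<close>

type_synonym cfg = "nat \<Rightarrow> nat"
type_synonym op = "cfg \<Rightarrow> cfg \<Rightarrow> complex"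

definition cfgs :: "nat \<Rightarrow> nat set \<Rightarrow> cfg set" where
  "cfgs d S = {s. (\<forall>i\<in>S. s i < d) \<and> (\<forall>i. i \<notin> S \<longrightarrow> s i = 0)}"

definition opsp :: "nat \<Rightarrow> nat set \<Rightarrow> op set" where
  "opsp d S = {A. \<forall>s t. s \<notin> cfgs d S \<or> t \<notin> cfgs d S \<longrightarrow> A s t = 0}"

definition opscale :: "complex \<Rightarrow> op \<Rightarrow> op" where
  "opscale c A = (\<lambda>s t. c * A s t)"

definition restr :: "nat set \<Rightarrow> cfg \<Rightarrow> cfg" where
  "restr S s = (\<lambda>i. if i \<in> S then s i else 0)"

definition glue :: "nat set \<Rightarrow> cfg \<Rightarrow> cfg \<Rightarrow> cfg" where
  "glue T u s = (\<lambda>i. if i \<in> T then u i else s i)"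

text \<open>Identification of A in V_I with A tensor identity in V_S (I a subset of S).\<close>
definition emb :: "nat \<Rightarrow> nat set \<Rightarrow> nat set \<Rightarrow> op \<Rightarrow> op" where
  "emb d I S A = (\<lambda>s t. if s \<in> cfgs d S \<and> t \<in> cfgs d S \<and> (\<forall>i\<in>S - I. s i = t i)
                        then A (restr I s) (restr I t) else 0)"

definition opmul :: "nat \<Rightarrow> nat set \<Rightarrow> op \<Rightarrow> op \<Rightarrow> op" where
  "opmul d S A B = (\<lambda>s t. if s \<in> cfgs d S \<and> t \<in> cfgs d S
                          then \<Sum>u\<in>cfgs d S. A s u * B u t else 0)"

definition ptr :: "nat \<Rightarrow> nat set \<Rightarrow> nat set \<Rightarrow> op \<Rightarrow> op" where
  "ptr d S T A = (\<lambda>s t. if s \<in> cfgs d (S - T) \<and> t \<in> cfgs d (S - T)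
                         then \<Sum>u\<in>cfgs d T. A (glue T u s) (glue T u t) else 0)"

definition optr :: "nat \<Rightarrow> nat set \<Rightarrow> op \<Rightarrow> complex" where
  "optr d S A = (\<Sum>s\<in>cfgs d S. A s s)"

definition hs :: "nat \<Rightarrow> nat set \<Rightarrow> op \<Rightarrow> op \<Rightarrow> complex" where
  "hs d S A B = (\<Sum>s\<in>cfgs d S. \<Sum>t\<in>cfgs d S. cnj (A s t) * B s t)"

text \<open>Tensor product X_i1 ... X_ik of single-site operators X i in V_{i}, i in S.\<close>
definition prodX :: "nat \<Rightarrow> nat set \<Rightarrow> (nat \<Rightarrow> op) \<Rightarrow> op" where
  "prodX d S X = (\<lambda>s t. if s \<in> cfgs d S \<and> t \<in> cfgs d S
                         then \<Prod>i\<in>S. X i (restr {i} s) (restr {i} t) else 0)"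

text \<open>The map E_I^J : V_J -> V_I, X |-> tr_{N \ I}[X Oh], for the chain {1..N}.\<close>
definition Emap :: "nat \<Rightarrow> nat \<Rightarrow> op \<Rightarrow> nat set \<Rightarrow> nat set \<Rightarrow> op \<Rightarrow> op" where
  "Emap d N Oh I J = (\<lambda>X. ptr d {1..N} ({1..N} - I) (opmul d {1..N} (emb d J {1..N} X) Oh))"

definition Erank :: "nat \<Rightarrow> nat \<Rightarrow> op \<Rightarrow> nat set \<Rightarrow> nat set \<Rightarrow> nat" where
  "Erank d N Oh I J = vector_space.dim opscale (Emap d N Oh I J ` opsp d J)"

text \<open>Moore--Penrose pseudoinverse of a linear map E : V_J -> V_I (w.r.t. the
  Hilbert--Schmidt inner products): pinv y is the unique x in V_J orthogonal to ker E
  such that y - E x is orthogonal to the range of E (minimal-norm least-squares solution).\<close>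
definition pinv :: "nat \<Rightarrow> nat set \<Rightarrow> nat set \<Rightarrow> (op \<Rightarrow> op) \<Rightarrow> op \<Rightarrow> op" where
  "pinv d I J E y = (THE x. x \<in> opsp d J
      \<and> (\<forall>z\<in>opsp d J. E z = 0 \<longrightarrow> hs d J z x = 0)
      \<and> (\<forall>z\<in>opsp d J. hs d I (E z) (y - E x) = 0))"

text \<open>(l,r)-invertibility of Oh (the range conditions on l, r are stated separately).\<close>
definition lr_invertible :: "nat \<Rightarrow> nat \<Rightarrow> op \<Rightarrow> nat \<Rightarrow> nat \<Rightarrow> bool" where
  "lr_invertible d N Oh l r \<longleftrightarrow>
     (\<forall>k. l \<le> k \<and> k \<le> N - r - 1 \<longrightarrow>
        Erank d N Oh {k - l + 1..k} {k + 1..k + r} = Erank d N Oh {1..k} {k + 1..N})"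

text \<open>Yseq j = Y_(N-r-j): Y_(N-r) = X_(N-r+1)...X_N, and
  Y_(k-1) = Ebar_{k-l..k-1}^{k..k+r-1} (E_{k-l..k-1}^{k..k+r} (X_k Y_k)).\<close>
fun Yseq :: "nat \<Rightarrow> nat \<Rightarrow> op \<Rightarrow> nat \<Rightarrow> nat \<Rightarrow> (nat \<Rightarrow> op) \<Rightarrow> nat \<Rightarrow> op" where
  "Yseq d N Oh l r X 0 = prodX d {N - r + 1..N} X"
| "Yseq d N Oh l r X (Suc j) =
     (let k = N - r - j in
        pinv d {k - l..k - 1} {k..k + r - 1} (Emap d N Oh {k - l..k - 1} {k..k + r - 1})
          (Emap d N Oh {k - l..k - 1} {k..k + r}
             (opmul d {k..k + r} (emb d {k} {k..k + r} (X k))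
                                 (emb d {k + 1..k + r} {k..k + r} (Yseq d N Oh l r X j)))))"

definition Yop :: "nat \<Rightarrow> nat \<Rightarrow> op \<Rightarrow> nat \<Rightarrow> nat \<Rightarrow> (nat \<Rightarrow> op) \<Rightarrow> nat \<Rightarrow> op" where
  "Yop d N Oh l r X k = Yseq d N Oh l r X (N - r - k)"

end

theory Submission
  imports Defs "HOL-Library.FuncSet"
begin

(* Write P_I for the tensor product of the single-site operators X_i, i in I, and
   E_I^J for the map V_J -> V_I, Z |-> tr_{N\I}[Z O].  The trace tr[X_1...X_N O] is the
   trace over {1..k} of P_{1..k} times E_{1..k}^{k+1..N}(P_{k+1..N}), so it suffices to
   replace, step by step from the right, the tail X_k Y_k on k..k+r by an operator
   Y_{k-1} on k..k+r-1 having the same image under E_{1..k-1}.  The rank condition of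
   (l,r)-invertibility says that the partial trace from sites 1..k-1 down to the window
   k-l..k-1 loses no information on the range of E_{1..k-1}^{k..N}, and that this range is
   already exhausted by operators on k..k+r-1.  Hence a preimage computed in the window
   by the Moore--Penrose pseudoinverse is a preimage for the full map as well. *)


section \<open>Configurations\<close>

lemma fun_sum_apply: "(sum f A) x = sum (\<lambda>a. f a x) A"
  by (induction A rule: infinite_finite_induct) auto

lemma finite_cfgs: "finite S \<Longrightarrow> finite (cfgs d S)"
proof -
  assume fS: "finite S"
  have "cfgs d S \<subseteq> restr S ` PiE S (\<lambda>_. {..<d})"
  proof
    fix s assume s: "s \<in> cfgs d S"
    have "s = restr S (restrict s S)" using s
      by (auto simp: restr_def cfgs_def fun_eq_iff)
    moreover have "restrict s S \<in> PiE S (\<lambda>_. {..<d})" using s by (auto simp: cfgs_def)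
    ultimately show "s \<in> restr S ` PiE S (\<lambda>_. {..<d})" by blast
  qed
  moreover have "finite (PiE S (\<lambda>_. {..<d}))" using fS by (intro finite_PiE) auto
  ultimately show ?thesis by (meson finite_imageI finite_subset)
qed

lemma restr_cfgs: "s \<in> cfgs d S \<Longrightarrow> T \<subseteq> S \<Longrightarrow> restr T s \<in> cfgs d T"
  by (auto simp: restr_def cfgs_def)

lemma restr_restr: "A \<subseteq> B \<Longrightarrow> restr A (restr B s) = restr A s"
  by (auto simp: restr_def fun_eq_iff)

lemma glue_cfgs: "u \<in> cfgs d T \<Longrightarrow> s \<in> cfgs d S \<Longrightarrow> glue T u s \<in> cfgs d (T \<union> S)"
  by (auto simp: glue_def cfgs_def)

lemma glue_glue: "glue (T1 \<union> T2) (glue T1 u1 u2) s = glue T1 u1 (glue T2 u2 s)"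
  by (auto simp: glue_def fun_eq_iff)

lemma cfgs_eqI: "s \<in> cfgs d S \<Longrightarrow> t \<in> cfgs d S \<Longrightarrow> (\<forall>i\<in>S. s i = t i) \<Longrightarrow> s = t"
  by (auto simp: cfgs_def fun_eq_iff)

lemma sum_cfgs_split:
  assumes "A \<inter> B = {}" "finite A" "finite B"
  shows "(\<Sum>s\<in>cfgs d (A \<union> B). f s) = (\<Sum>a\<in>cfgs d A. \<Sum>b\<in>cfgs d B. f (glue A a b))"
proof -
  have bij: "bij_betw (\<lambda>(a,b). glue A a b) (cfgs d A \<times> cfgs d B) (cfgs d (A \<union> B))"
  proof (rule bij_betw_imageI)
    show "inj_on (\<lambda>(a, b). glue A a b) (cfgs d A \<times> cfgs d B)"
    proof (rule inj_onI, clarify)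
      fix a b a' b' assume h: "a \<in> cfgs d A" "b \<in> cfgs d B" "a' \<in> cfgs d A" "b' \<in> cfgs d B"
        and e: "glue A a b = glue A a' b'"
      have "\<forall>i. glue A a b i = glue A a' b' i" using e by simp
      then show "a = a' \<and> b = b'" using h assms(1)
        by (auto simp: glue_def cfgs_def fun_eq_iff) (metis disjoint_iff)+
    qed
    show "(\<lambda>(a, b). glue A a b) ` (cfgs d A \<times> cfgs d B) = cfgs d (A \<union> B)"
    proof
      show "(\<lambda>(a, b). glue A a b) ` (cfgs d A \<times> cfgs d B) \<subseteq> cfgs d (A \<union> B)"
        by (auto intro: glue_cfgs)
      show "cfgs d (A \<union> B) \<subseteq> (\<lambda>(a, b). glue A a b) ` (cfgs d A \<times> cfgs d B)"
      proof
        fix s assume s: "s \<in> cfgs d (A \<union> B)"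
        have "s = glue A (restr A s) (restr B s)" using s
          by (auto simp: glue_def restr_def cfgs_def fun_eq_iff)
        moreover have "(restr A s, restr B s) \<in> cfgs d A \<times> cfgs d B"
          using s by (auto intro: restr_cfgs)
        ultimately show "s \<in> (\<lambda>(a, b). glue A a b) ` (cfgs d A \<times> cfgs d B)"
          by (metis (no_types, lifting) case_prod_conv image_eqI)
      qed
    qed
  qed
  have "(\<Sum>a\<in>cfgs d A. \<Sum>b\<in>cfgs d B. f (glue A a b))
      = (\<Sum>p\<in>cfgs d A \<times> cfgs d B. f ((\<lambda>(a,b). glue A a b) p))"
    by (simp add: sum.cartesian_product split_def)
  also have "\<dots> = (\<Sum>s\<in>cfgs d (A \<union> B). f s)"
    by (rule sum.reindex_bij_betw[OF bij])
  finally show ?thesis by simp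
qed

lemma sum_single_term:
  assumes "finite U" "u0 \<in> U" "\<And>u. u \<in> U \<Longrightarrow> u \<noteq> u0 \<Longrightarrow> f u = 0"
  shows "sum f U = f u0"
proof -
  have "sum f U = f u0 + sum f (U - {u0})" using assms(1,2) by (simp add: sum.remove)
  also have "sum f (U - {u0}) = 0" using assms(3) by (intro sum.neutral) auto
  finally show ?thesis by simp
qed


section \<open>The operator spaces as complex vector spaces\<close>

interpretation opv: vector_space opscale
  by unfold_locales (auto simp: opscale_def fun_eq_iff algebra_simps)

interpretation opp: vector_space_pair opscale opscale ..

lemma opscale_apply: "opscale c A s t = c * A s t"
  by (simp add: opscale_def)

lemma subspace_opsp: "opv.subspace (opsp d S)"
  unfolding opv.subspace_def by (auto simp: opsp_def opscale_apply)

lemma emb_opsp: "emb d J S X \<in> opsp d S"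
  by (auto simp: emb_def opsp_def)

lemma ptr_opsp: "ptr d S T M \<in> opsp d (S - T)"
  by (auto simp: ptr_def opsp_def)

definition mat_unit :: "cfg \<Rightarrow> cfg \<Rightarrow> op" where
  "mat_unit a b = (\<lambda>s t. if s = a \<and> t = b then 1 else 0)"

definition mat_units :: "nat \<Rightarrow> nat set \<Rightarrow> op set" where
  "mat_units d S = (\<lambda>(a,b). mat_unit a b) ` (cfgs d S \<times> cfgs d S)"

lemma finite_mat_units: "finite S \<Longrightarrow> finite (mat_units d S)"
  by (simp add: mat_units_def finite_cfgs)

lemma opsp_span_mat_units:
  assumes "finite S"
  shows "opsp d S \<subseteq> opv.span (mat_units d S)"
proof
  fix A assume A: "A \<in> opsp d S"
  let ?C = "cfgs d S \<times> cfgs d S"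
  have "A = (\<Sum>p\<in>?C. opscale (A (fst p) (snd p)) (mat_unit (fst p) (snd p)))"
  proof (intro ext)
    fix s t
    have "(\<Sum>p\<in>?C. opscale (A (fst p) (snd p)) (mat_unit (fst p) (snd p))) s t
        = (\<Sum>p\<in>?C. if p = (s, t) then A s t else 0)"
      by (simp add: fun_sum_apply mat_unit_def opscale_apply) (rule sum.cong, auto)
    also have "\<dots> = A s t"
      using A assms by (auto simp: finite_cfgs opsp_def)
    finally show "A s t = (\<Sum>p\<in>?C. opscale (A (fst p) (snd p)) (mat_unit (fst p) (snd p))) s t"
      by simp
  qed
  moreover have "(\<Sum>p\<in>?C. opscale (A (fst p) (snd p)) (mat_unit (fst p) (snd p)))
      \<in> opv.span (mat_units d S)"
    by (intro opv.span_sum opv.span_scale opv.span_base) (auto simp: mat_units_def)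
  ultimately show "A \<in> opv.span (mat_units d S)" by simp
qed


section \<open>Dimension arguments in finitely spanned subspaces\<close>

text \<open>The operator type is not finite-dimensional, so the library's theory of
  finite-dimensional spaces does not apply; everything below lives inside the span of a
  finite set F.\<close>

lemma finite_basis:
  assumes "V \<subseteq> opv.span F" "finite F"
  obtains B where "B \<subseteq> V" "opv.independent B" "V \<subseteq> opv.span B"
    "card B = opv.dim V" "finite B"
proof -
  obtain B where B: "B \<subseteq> V" "opv.independent B" "V \<subseteq> opv.span B" "card B = opv.dim V"
    using opv.basis_exists by blast
  moreover have "finite B"
    using opv.independent_span_bound[OF assms(2) B(2)] B(1) assms(1) by blast
  ultimately show ?thesis using that by blast
qed

lemma dim_linear_image_le:
  assumes lin: "Vector_Spaces.linear opscale opscale f"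
    and "U \<subseteq> opv.span F" "finite F"
  shows "opv.dim (f ` U) \<le> opv.dim U"
proof -
  obtain B where B: "U \<subseteq> opv.span B" "card B = opv.dim U" "finite B"
    using finite_basis[OF assms(2,3)] by metis
  have "f ` U \<subseteq> opv.span (f ` B)"
    using B(1) opp.linear_span_image[OF lin] by auto
  then have "opv.dim (f ` U) \<le> card (f ` B)"
    using opv.dim_le_card B(3) by blast
  also have "\<dots> \<le> card B" using B(3) by (rule card_image_le)
  finally show ?thesis using B(2) by simp
qed

lemma subspace_eq_of_dim_ge:
  assumes sU: "opv.subspace U" and UW: "U \<subseteq> W" and WF: "W \<subseteq> opv.span F" "finite F"
    and dim: "opv.dim W \<le> opv.dim U"
  shows "U = W"
proof
  have UF: "U \<subseteq> opv.span F" using UW WF(1) by (rule order_trans)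
  obtain B where B: "B \<subseteq> U" "opv.independent B" "card B = opv.dim U" "finite B"
    using finite_basis[OF UF WF(2)] by metis
  obtain C where C: "W \<subseteq> opv.span C" "card C = opv.dim W" "finite C"
    using finite_basis[OF WF] by metis
  show "W \<subseteq> U"
  proof
    fix w assume w: "w \<in> W"
    show "w \<in> U"
    proof (rule ccontr)
      assume "w \<notin> U"
      moreover have "opv.span B \<subseteq> U" by (rule opv.span_minimal[OF B(1) sU])
      ultimately have wB: "w \<notin> opv.span B" "w \<notin> B"
        using opv.span_base[of w B] by blast+
      have "opv.independent (insert w B)" by (rule opv.independent_insertI[OF wB(1) B(2)])
      moreover have "insert w B \<subseteq> opv.span C" using w B(1) UW C(1) by blast
      ultimately have "card (insert w B) \<le> card C"
        using opv.independent_span_bound[OF C(3)] by blast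
      moreover have "card (insert w B) = Suc (card B)" using wB(2) B(4) by simp
      ultimately show False using B(3) C(2) dim by linarith
    qed
  qed
qed (fact UW)

lemma linear_inj_on_of_dim_image:
  assumes lin: "Vector_Spaces.linear opscale opscale f"
    and WF: "W \<subseteq> opv.span F" "finite F"
    and dim: "opv.dim W \<le> opv.dim (f ` W)"
  shows "\<forall>x\<in>W. f x = 0 \<longrightarrow> x = 0"
proof -
  obtain B where B: "B \<subseteq> W" "opv.independent B" "W \<subseteq> opv.span B" "card B = opv.dim W"
    "finite B"
    using finite_basis[OF WF] by metis
  have fW: "f ` W \<subseteq> opv.span (f ` B)"
    using B(3) opp.linear_span_image[OF lin] by auto
  have card_le: "card B \<le> card (f ` B)"
    using B(4,5) dim opv.dim_le_card[OF fW] by simp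
  then have card_eq: "card (f ` B) = card B" using card_image_le[OF B(5), of f] by linarith
  then have inj: "inj_on f B" by (rule eq_card_imp_inj_on[OF B(5)])
  have indep: "opv.independent (f ` B)"
  proof
    assume "opv.dependent (f ` B)"
    then obtain a where a: "a \<in> f ` B" "a \<in> opv.span (f ` B - {a})"
      by (auto simp: opv.dependent_def)
    have "opv.span (f ` B) = opv.span (f ` B - {a})"
      using opv.span_redundant[OF a(2)] a(1) by (simp add: insert_absorb)
    then have "f ` W \<subseteq> opv.span (f ` B - {a})" using fW by simp
    then have "opv.dim (f ` W) \<le> card (f ` B - {a})"
      using B(5) by (intro opv.dim_le_card) auto
    moreover have "card (f ` B - {a}) < card (f ` B)"
      using a(1) B(5) by (meson card_Diff1_less finite_imageI)
    ultimately show False using card_eq dim B(4) by linarith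
  qed
  show ?thesis
    using opp.linear_indep_image_lemma[OF lin B(5) indep inj] B(3) by blast
qed

lemma rank_criterion:
  assumes sU: "opv.subspace U" and UW: "U \<subseteq> W" and WF: "W \<subseteq> opv.span F" "finite F"
    and lin: "Vector_Spaces.linear opscale opscale f"
    and rank: "opv.dim (f ` U) = opv.dim W"
  shows "U = W \<and> (\<forall>x\<in>W. f x = 0 \<longrightarrow> x = 0)"
proof -
  have "opv.dim (f ` U) \<le> opv.dim U"
    using UW WF by (intro dim_linear_image_le[OF lin]) auto
  then have "opv.dim W \<le> opv.dim U" using rank by simp
  then have "U = W" by (rule subspace_eq_of_dim_ge[OF sU UW WF])
  moreover have "\<forall>x\<in>W. f x = 0 \<longrightarrow> x = 0"
    using linear_inj_on_of_dim_image[OF lin WF] rank \<open>U = W\<close> by simp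
  ultimately show ?thesis by blast
qed


section \<open>Hilbert--Schmidt inner product and the pseudoinverse\<close>

lemma hs_add1: "hs d S (a + b) c = hs d S a c + hs d S b c"
  by (simp add: hs_def algebra_simps sum.distrib)

lemma hs_diff2: "hs d S a (b - c) = hs d S a b - hs d S a c"
  by (simp add: hs_def algebra_simps sum_subtractf)

lemma hs_scale1: "hs d S (opscale c a) b = cnj c * hs d S a b"
  by (simp add: hs_def sum_distrib_left algebra_simps opscale_apply)

lemma hs_scale2: "hs d S a (opscale c b) = c * hs d S a b"
  by (simp add: hs_def sum_distrib_left algebra_simps opscale_apply)

lemma hs_zero1: "hs d S 0 a = 0"
  by (simp add: hs_def)

lemma hs_zero2: "hs d S a 0 = 0"
  by (simp add: hs_def)

text \<open>Definiteness: hs a a is the sum of the squared moduli of the entries of a.\<close>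

lemma hs_self_zero:
  assumes "finite S" "a \<in> opsp d S" "hs d S a a = 0"
  shows "a = 0"
proof -
  have fin: "finite (cfgs d S)" using assms(1) by (rule finite_cfgs)
  have "hs d S a a = of_real (\<Sum>s\<in>cfgs d S. \<Sum>t\<in>cfgs d S. (cmod (a s t))\<^sup>2)"
    unfolding hs_def of_real_sum
    by (intro sum.cong refl) (metis complex_norm_square mult.commute)
  then have "(\<Sum>s\<in>cfgs d S. \<Sum>t\<in>cfgs d S. (cmod (a s t))\<^sup>2) = 0"
    using assms(3) of_real_eq_0_iff by metis
  then have "\<forall>s\<in>cfgs d S. \<forall>t\<in>cfgs d S. (cmod (a s t))\<^sup>2 = 0"
    using fin by (simp add: sum_nonneg_eq_0_iff sum_nonneg)
  then show "a = 0" using assms(2) by (auto simp: opsp_def fun_eq_iff)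
qed

lemma hs_span_zero:
  assumes "\<forall>g\<in>G. hs d S g x = 0" "z \<in> opv.span G"
  shows "hs d S z x = 0"
proof -
  have "opv.subspace {z. hs d S z x = 0}"
    unfolding opv.subspace_def by (auto simp: hs_add1 hs_scale1 hs_zero1)
  then have "opv.span G \<subseteq> {z. hs d S z x = 0}"
    using assms(1) by (intro opv.span_minimal) auto
  then show ?thesis using assms(2) by blast
qed

lemma orthogonal_correction:
  assumes orth_p: "\<forall>g\<in>F. hs d S g (x - p) = 0" and orth_a': "\<forall>g\<in>F. hs d S g a' = 0"
    and nz: "hs d S a' a' \<noteq> 0"
  defines "p' \<equiv> p + opscale (hs d S a' (x - p) / hs d S a' a') a'"
  shows "hs d S a' (x - p') = 0 \<and> (\<forall>g\<in>F. hs d S g (x - p') = 0)"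
proof -
  have x_p': "x - p' = (x - p) - opscale (hs d S a' (x - p) / hs d S a' a') a'"
    by (simp add: p'_def)
  show ?thesis
    using nz orth_p orth_a' by (simp add: x_p' hs_diff2 hs_scale2)
qed

text \<open>Orthogonal projection onto the span of a finite set F of operators, built by
  induction on F: when a new generator a is added, only its component a' orthogonal to
  span F needs to be taken into account.\<close>

lemma orthogonal_projection:
  assumes "finite F" "F \<subseteq> opsp d S" "finite S"
  shows "\<exists>p\<in>opv.span F. \<forall>g\<in>F. hs d S g (x - p) = 0"
  using assms(1,2)
proof (induction F arbitrary: x rule: finite_induct)
  case empty
  show ?case using opv.span_zero by blast
next
  case (insert a F)
  have FS: "F \<subseteq> opsp d S" using insert.prems by simp
  obtain p where p: "p \<in> opv.span F" "\<forall>g\<in>F. hs d S g (x - p) = 0"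
    using insert.IH[OF FS] by blast
  obtain q where q: "q \<in> opv.span F" "\<forall>g\<in>F. hs d S g (a - q) = 0"
    using insert.IH[OF FS] by blast
  define a' where "a' = a - q"
  have span_mono: "opv.span F \<subseteq> opv.span (insert a F)"
    by (rule opv.span_mono) blast
  have a'_span: "a' \<in> opv.span (insert a F)"
    unfolding a'_def using q(1) span_mono opv.span_base[of a "insert a F"]
    by (intro opv.span_diff) auto
  show ?case
  proof (cases "hs d S a' a' = 0")
    case True
    have "opv.span (insert a F) \<subseteq> opsp d S"
      using insert.prems subspace_opsp by (rule opv.span_minimal)
    then have "a' = 0" using hs_self_zero[OF assms(3) _ True] a'_span by blast
    then have "hs d S a (x - p) = 0" using hs_span_zero[OF p(2) q(1)] by (simp add: a'_def)
    then show ?thesis using p span_mono by blast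
  next
    case False
    define p' where "p' = p + opscale (hs d S a' (x - p) / hs d S a' a') a'"
    have orth: "hs d S a' (x - p') = 0" "\<forall>g\<in>F. hs d S g (x - p') = 0"
      using orthogonal_correction[OF p(2) _ False] q(2) unfolding p'_def a'_def by auto
    have "hs d S a (x - p') = hs d S a' (x - p') + hs d S q (x - p')"
      by (simp add: a'_def flip: hs_add1)
    then have "hs d S a (x - p') = 0" using orth hs_span_zero[OF orth(2) q(1)] by simp
    moreover have "p' \<in> opv.span (insert a F)"
      unfolding p'_def using p(1) span_mono a'_span by (intro opv.span_add opv.span_scale) auto
    ultimately show ?thesis using orth(2) by blast
  qed
qed

lemma pinv_eqI:
  assumes fI: "finite I" and fJ: "finite J"
    and lin: "Vector_Spaces.linear opscale opscale E"
    and rng: "\<forall>z\<in>opsp d J. E z \<in> opsp d I"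
    and x: "x \<in> opsp d J" "\<forall>z\<in>opsp d J. E z = 0 \<longrightarrow> hs d J z x = 0"
      "\<forall>z\<in>opsp d J. hs d I (E z) (y - E x) = 0"
  shows "pinv d I J E y = x"
  unfolding pinv_def
proof (rule the_equality)
  fix x' assume x': "x' \<in> opsp d J \<and> (\<forall>z\<in>opsp d J. E z = 0 \<longrightarrow> hs d J z x' = 0)
      \<and> (\<forall>z\<in>opsp d J. hs d I (E z) (y - E x') = 0)"
  define w where "w = x' - x"
  have w: "w \<in> opsp d J"
    unfolding w_def using x(1) x' subspace_opsp opv.subspace_diff by blast
  have Ew: "E w = (y - E x) - (y - E x')"
    unfolding w_def opp.linear_diff[OF lin] by simp
  have "hs d I (E w) (y - E x) = 0" "hs d I (E w) (y - E x') = 0"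
    using x(3) x' w by blast+
  then have "hs d I (E w) (E w) = 0"
    using hs_diff2[of d I "E w" "y - E x" "y - E x'"] by (simp flip: Ew)
  then have "E w = 0" using hs_self_zero[OF fI] rng w by blast
  then have "hs d J w w = 0" using x(2) x' w by (simp add: w_def hs_diff2)
  then show "x' = x" using hs_self_zero[OF fJ w] by (simp add: w_def)
qed (use x in blast)

text \<open>On the range of E the pseudoinverse is a right inverse: project any preimage
  orthogonally to the kernel of E.\<close>

lemma pinv_right_inverse:
  assumes fI: "finite I" and fJ: "finite J"
    and lin: "Vector_Spaces.linear opscale opscale E"
    and rng: "\<forall>z\<in>opsp d J. E z \<in> opsp d I"
    and y: "y \<in> E ` opsp d J"
  shows "pinv d I J E y \<in> opsp d J \<and> E (pinv d I J E y) = y"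
proof -
  define K where "K = {z \<in> opsp d J. E z = 0}"
  have sK: "opv.subspace K"
    using subspace_opsp[of d J] unfolding opv.subspace_def K_def
    by (auto simp: opp.linear_add[OF lin] opp.linear_scale[OF lin] opp.linear_0[OF lin])
  have KJ: "K \<subseteq> opsp d J" by (auto simp: K_def)
  have "K \<subseteq> opv.span (mat_units d J)" using KJ opsp_span_mat_units[OF fJ] by (rule order_trans)
  then obtain B where B: "B \<subseteq> K" "K \<subseteq> opv.span B" "finite B"
    using finite_basis[OF _ finite_mat_units[OF fJ]] by metis
  obtain x0 where x0: "x0 \<in> opsp d J" "E x0 = y" using y by blast
  obtain p where p: "p \<in> opv.span B" "\<forall>g\<in>B. hs d J g (x0 - p) = 0"
    using orthogonal_projection[OF B(3) order_trans[OF B(1) KJ] fJ] by blast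
  have "p \<in> K" using p(1) opv.span_minimal[OF B(1) sK] by blast
  then have "p \<in> opsp d J" "E p = 0" by (auto simp: K_def)
  then have x: "x0 - p \<in> opsp d J" "E (x0 - p) = y"
    using x0 subspace_opsp opv.subspace_diff opp.linear_diff[OF lin] by auto
  have "\<forall>z\<in>K. hs d J z (x0 - p) = 0"
    using hs_span_zero[OF p(2)] B(2) by blast
  then have "\<forall>z\<in>opsp d J. E z = 0 \<longrightarrow> hs d J z (x0 - p) = 0"
    by (simp add: K_def)
  then have "pinv d I J E y = x0 - p"
    using pinv_eqI[OF fI fJ lin rng] x by (simp add: hs_zero2)
  then show ?thesis using x by simp
qed


section \<open>Products, embeddings and partial traces\<close>

lemma opmul_assoc:
  assumes "finite S"
  shows "opmul d S (opmul d S A B) C = opmul d S A (opmul d S B C)"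
proof (intro ext)
  fix s t
  show "opmul d S (opmul d S A B) C s t = opmul d S A (opmul d S B C) s t"
  proof (cases "s \<in> cfgs d S \<and> t \<in> cfgs d S")
    case True
    have "opmul d S (opmul d S A B) C s t = (\<Sum>u\<in>cfgs d S. \<Sum>v\<in>cfgs d S. A s v * B v u * C u t)"
      using True by (auto simp: opmul_def sum_distrib_right intro!: sum.cong)
    also have "\<dots> = (\<Sum>v\<in>cfgs d S. \<Sum>u\<in>cfgs d S. A s v * B v u * C u t)"
      by (rule sum.swap)
    also have "\<dots> = opmul d S A (opmul d S B C) s t"
      using True by (auto simp: opmul_def sum_distrib_left mult.assoc intro!: sum.cong)
    finally show ?thesis .
  qed (auto simp: opmul_def)
qed

lemma opmul_emb_disjoint:
  assumes AB: "A \<inter> B = {}" and "A \<subseteq> S" "B \<subseteq> S" and fS: "finite S"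
  shows "opmul d S (emb d A S P) (emb d B S Q) =
    (\<lambda>s t. if s \<in> cfgs d S \<and> t \<in> cfgs d S \<and> (\<forall>i\<in>S - (A \<union> B). s i = t i)
           then P (restr A s) (restr A t) * Q (restr B s) (restr B t) else 0)"
proof (intro ext)
  fix s t
  show "opmul d S (emb d A S P) (emb d B S Q) s t =
    (if s \<in> cfgs d S \<and> t \<in> cfgs d S \<and> (\<forall>i\<in>S - (A \<union> B). s i = t i)
     then P (restr A s) (restr A t) * Q (restr B s) (restr B t) else 0)"
  proof (cases "s \<in> cfgs d S \<and> t \<in> cfgs d S")
    case True
    text \<open>Only the intermediate configuration taking the values of t on A and of s
      elsewhere contributes to the matrix product.\<close>
    define u0 where "u0 = (\<lambda>i. if i \<in> A then t i else s i)"
    have u0: "u0 \<in> cfgs d S" using True by (auto simp: u0_def cfgs_def)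
    have "(\<Sum>u\<in>cfgs d S. emb d A S P s u * emb d B S Q u t)
        = emb d A S P s u0 * emb d B S Q u0 t"
    proof (rule sum_single_term[OF finite_cfgs[OF fS] u0])
      fix u assume u: "u \<in> cfgs d S" "u \<noteq> u0"
      show "emb d A S P s u * emb d B S Q u t = 0"
      proof (rule ccontr)
        assume "emb d A S P s u * emb d B S Q u t \<noteq> 0"
        then have "\<forall>i\<in>S - A. s i = u i" "\<forall>i\<in>S - B. u i = t i"
          by (auto simp: emb_def split: if_splits)
        then have "u = u0"
          using AB by (intro cfgs_eqI[OF u(1) u0]) (auto simp: u0_def)
        then show False using u(2) by simp
      qed
    qed
    moreover have "restr A u0 = restr A t" "restr B u0 = restr B s"
      using AB by (auto simp: restr_def u0_def fun_eq_iff)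
    ultimately show ?thesis
      using True u0 by (auto simp: opmul_def emb_def u0_def)
  qed (auto simp: opmul_def)
qed

lemma emb_trans:
  assumes "J1 \<subseteq> J2" "J2 \<subseteq> S"
  shows "emb d J2 S (emb d J1 J2 X) = emb d J1 S X"
proof (intro ext)
  fix s t
  show "emb d J2 S (emb d J1 J2 X) s t = emb d J1 S X s t"
  proof (cases "s \<in> cfgs d S \<and> t \<in> cfgs d S")
    case True
    then have "restr J2 s \<in> cfgs d J2" "restr J2 t \<in> cfgs d J2"
      using assms by (auto intro: restr_cfgs)
    moreover have "(\<forall>i\<in>S - J2. s i = t i) \<and> (\<forall>i\<in>J2 - J1. restr J2 s i = restr J2 t i)
        \<longleftrightarrow> (\<forall>i\<in>S - J1. s i = t i)"
      using assms by (auto simp: restr_def)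
    ultimately show ?thesis using True assms by (auto simp: emb_def restr_restr)
  qed (auto simp: emb_def)
qed

lemma emb_opmul_disjoint:
  assumes AB: "A \<inter> B = {}" and C: "A \<union> B = C" and CS: "C \<subseteq> S" and fS: "finite S"
  shows "emb d C S (opmul d C (emb d A C P) (emb d B C Q)) = opmul d S (emb d A S P) (emb d B S Q)"
proof -
  have fC: "finite C" using CS fS by (rule finite_subset)
  have sub: "A \<subseteq> C" "B \<subseteq> C" "A \<subseteq> S" "B \<subseteq> S" using C CS by auto
  show ?thesis
    unfolding opmul_emb_disjoint[OF AB sub(3,4) fS] opmul_emb_disjoint[OF AB sub(1,2) fC]
    using C CS sub by (auto simp: emb_def fun_eq_iff restr_restr intro: restr_cfgs)
qed

lemma prodX_restr:
  assumes "A \<subseteq> S" "s \<in> cfgs d S" "t \<in> cfgs d S"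
  shows "prodX d A X (restr A s) (restr A t) = (\<Prod>i\<in>A. X i (restr {i} s) (restr {i} t))"
  using assms by (auto simp: prodX_def restr_restr intro!: prod.cong restr_cfgs)

lemma prodX_split:
  assumes AB: "A \<inter> B = {}" and C: "A \<union> B = C" and fC: "finite C"
  shows "prodX d C X = opmul d C (emb d A C (prodX d A X)) (emb d B C (prodX d B X))"
proof (intro ext)
  fix s t
  have fAB: "finite A" "finite B" and sub: "A \<subseteq> C" "B \<subseteq> C" using C fC by auto
  show "prodX d C X s t = opmul d C (emb d A C (prodX d A X)) (emb d B C (prodX d B X)) s t"
  proof (cases "s \<in> cfgs d C \<and> t \<in> cfgs d C")
    case True
    have "prodX d C X s t = (\<Prod>i\<in>A \<union> B. X i (restr {i} s) (restr {i} t))"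
      using True C by (simp add: prodX_def)
    also have "\<dots> = (\<Prod>i\<in>A. X i (restr {i} s) (restr {i} t)) * (\<Prod>i\<in>B. X i (restr {i} s) (restr {i} t))"
      by (rule prod.union_disjoint[OF fAB AB])
    also have "\<dots> = opmul d C (emb d A C (prodX d A X)) (emb d B C (prodX d B X)) s t"
      using True C by (simp add: opmul_emb_disjoint[OF AB sub fC] prodX_restr[OF sub(1)]
          prodX_restr[OF sub(2)])
    finally show ?thesis .
  qed (auto simp: opmul_emb_disjoint[OF AB sub fC] prodX_def)
qed

lemma emb_prodX_single:
  assumes "k \<in> S"
  shows "emb d {k} S (prodX d {k} X) = emb d {k} S (X k)"
  using assms by (auto simp: emb_def fun_eq_iff prodX_restr)

lemma ptr_comp:
  assumes T12: "T1 \<inter> T2 = {}" and S': "S' = S - T1" and T2S: "T2 \<subseteq> S'"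
    and f1: "finite T1" and f2: "finite T2"
  shows "ptr d S' T2 (ptr d S T1 M) = ptr d S (T1 \<union> T2) M"
proof (intro ext)
  fix s t
  have eqS: "S' - T2 = S - (T1 \<union> T2)" using S' by auto
  show "ptr d S' T2 (ptr d S T1 M) s t = ptr d S (T1 \<union> T2) M s t"
  proof (cases "s \<in> cfgs d (S' - T2) \<and> t \<in> cfgs d (S' - T2)")
    case True
    have "T2 \<union> (S' - T2) = S - T1" using S' T2S by auto
    then have gl: "glue T2 u2 s \<in> cfgs d (S - T1)" "glue T2 u2 t \<in> cfgs d (S - T1)"
      if "u2 \<in> cfgs d T2" for u2
      using glue_cfgs[OF that, of s "S' - T2"] glue_cfgs[OF that, of t "S' - T2"] True by auto
    have "ptr d S' T2 (ptr d S T1 M) s t = (\<Sum>u2\<in>cfgs d T2. \<Sum>u1\<in>cfgs d T1.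
        M (glue T1 u1 (glue T2 u2 s)) (glue T1 u1 (glue T2 u2 t)))"
      using True gl S' by (auto simp: ptr_def intro!: sum.cong)
    also have "\<dots> = (\<Sum>u1\<in>cfgs d T1. \<Sum>u2\<in>cfgs d T2.
        M (glue T1 u1 (glue T2 u2 s)) (glue T1 u1 (glue T2 u2 t)))"
      by (rule sum.swap)
    also have "\<dots> = (\<Sum>u\<in>cfgs d (T1 \<union> T2). M (glue (T1 \<union> T2) u s) (glue (T1 \<union> T2) u t))"
      by (simp add: sum_cfgs_split[OF T12 f1 f2] glue_glue)
    also have "\<dots> = ptr d S (T1 \<union> T2) M s t" using True eqS by (simp add: ptr_def)
    finally show ?thesis .
  qed (use eqS in \<open>auto simp: ptr_def\<close>)
qed

lemma optr_ptr:
  assumes BS: "B \<subseteq> S" and fS: "finite S"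
  shows "optr d S M = optr d B (ptr d S (S - B) M)"
proof -
  have SB: "S = (S - B) \<union> B" "S - (S - B) = B" using BS by auto
  have fin: "finite (S - B)" "finite B" using fS BS finite_subset by auto
  have "optr d S M = (\<Sum>u\<in>cfgs d (S - B). \<Sum>b\<in>cfgs d B. M (glue (S - B) u b) (glue (S - B) u b))"
    unfolding optr_def by (subst SB(1), rule sum_cfgs_split[OF _ fin]) auto
  also have "\<dots> = (\<Sum>b\<in>cfgs d B. \<Sum>u\<in>cfgs d (S - B). M (glue (S - B) u b) (glue (S - B) u b))"
    by (rule sum.swap)
  also have "\<dots> = optr d B (ptr d S (S - B) M)"
    unfolding optr_def ptr_def SB(2) by simp
  finally show ?thesis .
qed

lemma emb_glue:
  assumes JB: "J \<subseteq> B" and BS: "B \<subseteq> S" and T: "T = S - B"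
    and u: "u \<in> cfgs d T" and u': "u' \<in> cfgs d T" and s: "s \<in> cfgs d B" and v: "v \<in> cfgs d B"
  shows "emb d J S X (glue T u s) (glue T u' v) = (if u' = u then emb d J B X s v else 0)"
proof -
  have "T \<union> B = S" using T BS by auto
  then have g: "glue T u s \<in> cfgs d S" "glue T u' v \<in> cfgs d S"
    using glue_cfgs[OF u s] glue_cfgs[OF u' v] by auto
  have rJ: "restr J (glue T u s) = restr J s" "restr J (glue T u' v) = restr J v"
    using JB T by (auto simp: restr_def glue_def fun_eq_iff)
  show ?thesis
  proof (cases "u' = u")
    case True
    have "(\<forall>i\<in>S - J. glue T u s i = glue T u' v i) \<longleftrightarrow> (\<forall>i\<in>B - J. s i = v i)"
      using True T JB BS by (auto simp: glue_def)
    then show ?thesis using True g rJ s v by (simp add: emb_def)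
  next
    case False
    then obtain i where i: "i \<in> T" "u i \<noteq> u' i" using u u' cfgs_eqI by blast
    then have "i \<in> S - J" "glue T u s i \<noteq> glue T u' v i" using T JB by (auto simp: glue_def)
    then show ?thesis using False by (auto simp: emb_def)
  qed
qed

text \<open>A row of an operator embedded from J \<subseteq> B only couples configurations that
  agree outside B, so multiplying by it commutes with summing over S - B.\<close>

lemma sum_emb_row:
  assumes JB: "J \<subseteq> B" and BS: "B \<subseteq> S" and fS: "finite S" and T: "T = S - B"
    and u: "u \<in> cfgs d T" and s: "s \<in> cfgs d B"
  shows "(\<Sum>v\<in>cfgs d S. emb d J S X (glue T u s) v * M v)
       = (\<Sum>v\<in>cfgs d B. emb d J B X s v * M (glue T u v))"
proof -
  have dj: "T \<inter> B = {}" and TB: "T \<union> B = S" using T BS by auto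
  have fT: "finite T" "finite B" using fS BS finite_subset T by auto
  have "(\<Sum>v\<in>cfgs d S. emb d J S X (glue T u s) v * M v)
      = (\<Sum>u'\<in>cfgs d T. \<Sum>v\<in>cfgs d B. emb d J S X (glue T u s) (glue T u' v) * M (glue T u' v))"
    by (subst TB[symmetric], subst sum_cfgs_split[OF dj fT]) simp
  also have "\<dots> = (\<Sum>u'\<in>cfgs d T. if u' = u then
      (\<Sum>v\<in>cfgs d B. emb d J B X s v * M (glue T u v)) else 0)"
    using emb_glue[OF JB BS T u _ s] by (intro sum.cong refl) (auto intro!: sum.neutral)
  also have "\<dots> = (\<Sum>v\<in>cfgs d B. emb d J B X s v * M (glue T u v))"
    using u finite_cfgs[OF fT(1)] by simp
  finally show ?thesis .
qed

lemma ptr_pull: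
  assumes JB: "J \<subseteq> B" and BS: "B \<subseteq> S" and fS: "finite S"
  shows "ptr d S (S - B) (opmul d S (emb d J S X) M) = opmul d B (emb d J B X) (ptr d S (S - B) M)"
proof (intro ext)
  fix s t
  define T where "T = S - B"
  have SB: "S - T = B" "T \<union> B = S" using BS T_def by auto
  show "ptr d S (S - B) (opmul d S (emb d J S X) M) s t = opmul d B (emb d J B X) (ptr d S (S - B) M) s t"
  proof (cases "s \<in> cfgs d B \<and> t \<in> cfgs d B")
    case True
    have gS: "glue T u s \<in> cfgs d S" "glue T u t \<in> cfgs d S" if "u \<in> cfgs d T" for u
      using glue_cfgs[OF that, of s B] glue_cfgs[OF that, of t B] True SB by auto
    have "ptr d S (S - B) (opmul d S (emb d J S X) M) s t
        = (\<Sum>u\<in>cfgs d T. \<Sum>v\<in>cfgs d S. emb d J S X (glue T u s) v * M v (glue T u t))"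
      using True gS SB unfolding T_def[symmetric] by (auto simp: ptr_def opmul_def intro!: sum.cong)
    also have "\<dots> = (\<Sum>u\<in>cfgs d T. \<Sum>v\<in>cfgs d B. emb d J B X s v * M (glue T u v) (glue T u t))"
      using sum_emb_row[OF JB BS fS T_def _ conjunct1[OF True]] by simp
    also have "\<dots> = (\<Sum>v\<in>cfgs d B. emb d J B X s v * (\<Sum>u\<in>cfgs d T. M (glue T u v) (glue T u t)))"
      by (subst sum.swap) (simp add: sum_distrib_left)
    also have "\<dots> = opmul d B (emb d J B X) (ptr d S (S - B) M) s t"
      using True SB unfolding T_def[symmetric] by (auto simp: ptr_def opmul_def intro!: sum.cong)
    finally show ?thesis .
  qed (use SB in \<open>auto simp: ptr_def opmul_def T_def\<close>)
qed


section \<open>The maps E and the recursion step\<close>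

lemma Emap_opsp: "I \<subseteq> {1..N} \<Longrightarrow> Emap d N Oh I J X \<in> opsp d I"
  using ptr_opsp[of d "{1..N}" "{1..N} - I"] by (simp add: Emap_def Diff_Diff_Int Int_absorb1)

lemma linear_ptr: "Vector_Spaces.linear opscale opscale (ptr d S T)"
  unfolding Vector_Spaces.linear_iff using opv.vector_space_axioms
  by (auto simp: ptr_def fun_eq_iff sum.distrib opscale_def sum_distrib_left)

lemma linear_Emap: "Vector_Spaces.linear opscale opscale (Emap d N Oh I J)"
proof -
  have "emb d J S (X + Y) = emb d J S X + emb d J S Y"
    "emb d J S (opscale c X) = opscale c (emb d J S X)"
    "opmul d S (A + B) C = opmul d S A C + opmul d S B C"
    "opmul d S (opscale c A) C = opscale c (opmul d S A C)"
    for S X Y A B C c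
    by (auto simp: emb_def opmul_def fun_eq_iff opscale_def algebra_simps sum.distrib
        sum_distrib_left)
  then show ?thesis
    unfolding Vector_Spaces.linear_iff Emap_def
    using opv.vector_space_axioms opp.linear_add[OF linear_ptr] opp.linear_scale[OF linear_ptr]
    by simp
qed

lemma Emap_emb:
  assumes "J1 \<subseteq> J2" "J2 \<subseteq> {1..N}"
  shows "Emap d N Oh I J1 X = Emap d N Oh I J2 (emb d J1 J2 X)"
  using emb_trans[OF assms] by (simp add: Emap_def)

lemma Emap_restrict_target:
  assumes IlI: "Il \<subseteq> I" and IS: "I \<subseteq> {1..N}"
  shows "Emap d N Oh Il J X = ptr d I (I - Il) (Emap d N Oh I J X)"
proof -
  have "({1..N} - I) \<union> (I - Il) = {1..N} - Il" using IlI IS by auto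
  moreover have "ptr d I (I - Il) (Emap d N Oh I J X)
      = ptr d {1..N} (({1..N} - I) \<union> (I - Il)) (opmul d {1..N} (emb d J {1..N} X) Oh)"
    unfolding Emap_def by (rule ptr_comp) (use IlI IS in \<open>auto intro: finite_subset\<close>)
  ultimately show ?thesis by (simp add: Emap_def)
qed

lemma Emap_block_local:
  assumes IB: "I \<subseteq> B" and JB: "J \<subseteq> B" and BS: "B \<subseteq> {1..N}"
  shows "Emap d N Oh I J X = ptr d B (B - I) (opmul d B (emb d J B X) (ptr d {1..N} ({1..N} - B) Oh))"
proof -
  have "({1..N} - B) \<union> (B - I) = {1..N} - I" using IB BS by auto
  then have "Emap d N Oh I J X
      = ptr d {1..N} (({1..N} - B) \<union> (B - I)) (opmul d {1..N} (emb d J {1..N} X) Oh)"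
    by (simp add: Emap_def)
  also have "\<dots> = ptr d B (B - I) (ptr d {1..N} ({1..N} - B) (opmul d {1..N} (emb d J {1..N} X) Oh))"
    by (rule ptr_comp[symmetric]) (use BS in \<open>auto intro: finite_subset\<close>)
  also have "\<dots> = ptr d B (B - I) (opmul d B (emb d J B X) (ptr d {1..N} ({1..N} - B) Oh))"
    using ptr_pull[OF JB BS] by simp
  finally show ?thesis .
qed

definition pair_trace :: "nat \<Rightarrow> nat \<Rightarrow> op \<Rightarrow> nat set \<Rightarrow> op \<Rightarrow> nat set \<Rightarrow> op \<Rightarrow> complex" where
  "pair_trace d N Oh I P J Q =
     optr d {1..N} (opmul d {1..N} (opmul d {1..N} (emb d I {1..N} P) (emb d J {1..N} Q)) Oh)"

text \<open>tr[P_I Q_J O] = tr_I[P E_I^J(Q)]: Q enters only through its image under E.\<close>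

lemma pair_trace_Emap:
  assumes IS: "I \<subseteq> {1..N}"
  shows "pair_trace d N Oh I P J Q = optr d I (opmul d I (emb d I I P) (Emap d N Oh I J Q))"
proof -
  let ?S = "{1..N::nat}"
  have "pair_trace d N Oh I P J Q
      = optr d ?S (opmul d ?S (emb d I ?S P) (opmul d ?S (emb d J ?S Q) Oh))"
    by (simp add: pair_trace_def opmul_assoc)
  also have "\<dots> = optr d I (ptr d ?S (?S - I) (opmul d ?S (emb d I ?S P) (opmul d ?S (emb d J ?S Q) Oh)))"
    by (rule optr_ptr[OF IS]) simp
  also have "\<dots> = optr d I (opmul d I (emb d I I P) (ptr d ?S (?S - I) (opmul d ?S (emb d J ?S Q) Oh)))"
    using ptr_pull[OF subset_refl IS] by simp
  finally show ?thesis by (simp add: Emap_def)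
qed

lemma rank_equality_consequences:
  assumes IlI: "Il \<subseteq> I" and IS: "I \<subseteq> {1..N}" and JL: "J \<subseteq> L" and LS: "L \<subseteq> {1..N}"
    and rank: "Erank d N Oh Il J = Erank d N Oh I L"
  shows "Emap d N Oh I J ` opsp d J = Emap d N Oh I L ` opsp d L
    \<and> (\<forall>A\<in>Emap d N Oh I L ` opsp d L. ptr d I (I - Il) A = 0 \<longrightarrow> A = 0)"
proof (rule rank_criterion)
  have fI: "finite I" using IS by (rule finite_subset) simp
  show "opv.subspace (Emap d N Oh I J ` opsp d J)"
    by (rule opp.linear_subspace_image[OF linear_Emap subspace_opsp])
  show "Emap d N Oh I J ` opsp d J \<subseteq> Emap d N Oh I L ` opsp d L"
    using Emap_emb[OF JL LS] emb_opsp by blast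
  show "Emap d N Oh I L ` opsp d L \<subseteq> opv.span (mat_units d I)"
    using Emap_opsp[OF IS] opsp_span_mat_units[OF fI] by blast
  show "finite (mat_units d I)" using fI by (rule finite_mat_units)
  show "Vector_Spaces.linear opscale opscale (ptr d I (I - Il))" by (rule linear_ptr)
  have "ptr d I (I - Il) ` Emap d N Oh I J ` opsp d J = Emap d N Oh Il J ` opsp d J"
    using Emap_restrict_target[OF IlI IS] by (simp add: image_image)
  then show "opv.dim (ptr d I (I - Il) ` Emap d N Oh I J ` opsp d J)
      = opv.dim (Emap d N Oh I L ` opsp d L)"
    using rank by (simp add: Erank_def)
qed

lemma Emap_pinv_step:
  assumes IlI: "Il \<subseteq> I" and IS: "I \<subseteq> {1..N}"
    and KJ: "K \<subseteq> J" and JL: "J \<subseteq> L" and LS: "L \<subseteq> {1..N}"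
    and rank: "Erank d N Oh Il K = Erank d N Oh I L"
  shows "Emap d N Oh I J Z =
    Emap d N Oh I K (pinv d Il K (Emap d N Oh Il K) (Emap d N Oh Il J Z))"
proof -
  let ?W = "Emap d N Oh I L ` opsp d L"
  define Y where "Y = pinv d Il K (Emap d N Oh Il K) (Emap d N Oh Il J Z)"
  have window: "Emap d N Oh Il J' X = ptr d I (I - Il) (Emap d N Oh I J' X)" for J' X
    by (rule Emap_restrict_target[OF IlI IS])
  have KS: "K \<subseteq> {1..N}" using KJ JL LS by blast
  have rc: "Emap d N Oh I K ` opsp d K = ?W" "\<forall>A\<in>?W. ptr d I (I - Il) A = 0 \<longrightarrow> A = 0"
    using rank_equality_consequences[OF IlI IS order_trans[OF KJ JL] LS rank] by blast+
  have target: "Emap d N Oh I J Z \<in> ?W"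
    using Emap_emb[OF JL LS] emb_opsp by blast
  then obtain X0 where "X0 \<in> opsp d K" "Emap d N Oh I K X0 = Emap d N Oh I J Z"
    using rc(1) by (metis imageE)
  then have "Emap d N Oh Il J Z \<in> Emap d N Oh Il K ` opsp d K"
    using window by (metis image_eqI)
  moreover have "finite Il" "finite K" using IlI IS KS by (auto intro: finite_subset)
  moreover have "\<forall>z\<in>opsp d K. Emap d N Oh Il K z \<in> opsp d Il"
    using IlI IS by (intro ballI Emap_opsp) auto
  ultimately have Y: "Y \<in> opsp d K" "Emap d N Oh Il K Y = Emap d N Oh Il J Z"
    unfolding Y_def using pinv_right_inverse[OF _ _ linear_Emap] by blast+
  have "opv.subspace ?W" by (rule opp.linear_subspace_image[OF linear_Emap subspace_opsp])
  moreover have "Emap d N Oh I K Y \<in> ?W" using Y(1) rc(1) by blast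
  ultimately have "Emap d N Oh I K Y - Emap d N Oh I J Z \<in> ?W"
    using target by (rule opv.subspace_diff)
  moreover have "ptr d I (I - Il) (Emap d N Oh I K Y - Emap d N Oh I J Z) = 0"
    using Y(2) window opp.linear_diff[OF linear_ptr] by simp
  ultimately have "Emap d N Oh I K Y - Emap d N Oh I J Z = 0" using rc(2) by blast
  then have "Emap d N Oh I K Y = Emap d N Oh I J Z" by simp
  then show ?thesis by (simp add: Y_def)
qed


section \<open>The telescoping identity\<close>

lemma lr_invertible_rank:
  assumes "lr_invertible d N Oh l r" "l + 1 \<le> k" "k + r \<le> N"
  shows "Erank d N Oh {k - l..k - 1} {k..k + r - 1} = Erank d N Oh {1..k - 1} {k..N}"
proof -
  have "l \<le> k - 1 \<and> k - 1 \<le> N - r - 1" using assms(2,3) by auto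
  then have "Erank d N Oh {k - 1 - l + 1..k - 1} {k - 1 + 1..k - 1 + r}
      = Erank d N Oh {1..k - 1} {k - 1 + 1..N}"
    using assms(1) unfolding lr_invertible_def by blast
  moreover have "k - 1 - l + 1 = k - l" "k - 1 + 1 = k" "k - 1 + r = k + r - 1"
    using assms(2) by auto
  ultimately show ?thesis by simp
qed

lemma Yop_rec:
  assumes "1 \<le> k" "k \<le> N - r"
  shows "Yop d N Oh l r X (k - 1) = pinv d {k - l..k - 1} {k..k + r - 1}
     (Emap d N Oh {k - l..k - 1} {k..k + r - 1})
     (Emap d N Oh {k - l..k - 1} {k..k + r}
        (opmul d {k..k + r} (emb d {k} {k..k + r} (X k))
           (emb d {k + 1..k + r} {k..k + r} (Yop d N Oh l r X k))))"
proof -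
  have "N - r - (k - 1) = Suc (N - r - k)" "N - r - (N - r - k) = k" using assms by auto
  then show ?thesis unfolding Yop_def by (simp only: Yseq.simps Let_def)
qed

lemma peel_factor:
  assumes k1: "1 \<le> k" and kN: "k + r \<le> N"
  shows "opmul d {1..N} (emb d {1..k} {1..N} (prodX d {1..k} X)) (emb d {k + 1..k + r} {1..N} Y)
       = opmul d {1..N} (emb d {1..k - 1} {1..N} (prodX d {1..k - 1} X))
           (emb d {k..k + r} {1..N}
              (opmul d {k..k + r} (emb d {k} {k..k + r} (X k)) (emb d {k + 1..k + r} {k..k + r} Y)))"
proof -
  let ?S = "{1..N}" and ?P = "prodX d {1..k - 1} X"
  have head: "{1..k - 1} \<union> {k} = {1..k}" and tail: "{k} \<union> {k + 1..k + r} = {k..k + r}"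
    using k1 by auto
  have "emb d {1..k} ?S (prodX d {1..k} X)
      = emb d {1..k} ?S (opmul d {1..k} (emb d {1..k - 1} {1..k} ?P) (emb d {k} {1..k} (prodX d {k} X)))"
    by (subst prodX_split[OF _ head]) auto
  also have "\<dots> = opmul d ?S (emb d {1..k - 1} ?S ?P) (emb d {k} ?S (X k))"
    using kN k1 by (subst emb_opmul_disjoint[OF _ head]) (auto simp: emb_prodX_single)
  finally have "emb d {1..k} ?S (prodX d {1..k} X)
      = opmul d ?S (emb d {1..k - 1} ?S ?P) (emb d {k} ?S (X k))" .
  moreover have "emb d {k..k + r} ?S
        (opmul d {k..k + r} (emb d {k} {k..k + r} (X k)) (emb d {k + 1..k + r} {k..k + r} Y))
      = opmul d ?S (emb d {k} ?S (X k)) (emb d {k + 1..k + r} ?S Y)"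
    using kN k1 by (intro emb_opmul_disjoint[OF _ tail]) auto
  ultimately show ?thesis by (simp add: opmul_assoc)
qed

lemma pair_trace_step:
  assumes kl: "l + 1 \<le> k" and kN: "k + r \<le> N" and inv: "lr_invertible d N Oh l r"
  shows "pair_trace d N Oh {1..k} (prodX d {1..k} X) {k + 1..k + r} (Yop d N Oh l r X k)
       = pair_trace d N Oh {1..k - 1} (prodX d {1..k - 1} X) {k..k + r - 1} (Yop d N Oh l r X (k - 1))"
proof -
  define Z where "Z = opmul d {k..k + r} (emb d {k} {k..k + r} (X k))
    (emb d {k + 1..k + r} {k..k + r} (Yop d N Oh l r X k))"
  let ?P = "prodX d {1..k - 1} X"
  have k1: "1 \<le> k" and IS: "{1..k - 1} \<subseteq> {1..N}" using kl kN by auto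
  have Y: "Yop d N Oh l r X (k - 1) =
      pinv d {k - l..k - 1} {k..k + r - 1} (Emap d N Oh {k - l..k - 1} {k..k + r - 1})
        (Emap d N Oh {k - l..k - 1} {k..k + r} Z)"
    unfolding Z_def using kl kN by (intro Yop_rec) auto
  have E: "Emap d N Oh {1..k - 1} {k..k + r} Z = Emap d N Oh {1..k - 1} {k..k + r - 1} (Yop d N Oh l r X (k - 1))"
    unfolding Y using kl kN
    by (intro Emap_pinv_step[where L = "{k..N}"] lr_invertible_rank[OF inv]) auto
  have "pair_trace d N Oh {1..k} (prodX d {1..k} X) {k + 1..k + r} (Yop d N Oh l r X k)
      = pair_trace d N Oh {1..k - 1} ?P {k..k + r} Z"
    unfolding pair_trace_def peel_factor[OF k1 kN] Z_def ..
  also have "\<dots> = pair_trace d N Oh {1..k - 1} ?P {k..k + r - 1} (Yop d N Oh l r X (k - 1))"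
    unfolding pair_trace_Emap[OF IS] E ..
  finally show ?thesis .
qed

lemma trace_telescoping:
  assumes lrN: "l + r \<le> N" and inv: "lr_invertible d N Oh l r"
  shows "optr d {1..N} (opmul d {1..N} (prodX d {1..N} X) Oh)
       = pair_trace d N Oh {1..l} (prodX d {1..l} X) {l + 1..l + r} (Yop d N Oh l r X l)"
proof -
  let ?T = "\<lambda>k. pair_trace d N Oh {1..k} (prodX d {1..k} X) {k + 1..k + r} (Yop d N Oh l r X k)"
  have top: "optr d {1..N} (opmul d {1..N} (prodX d {1..N} X) Oh) = ?T (N - r)"
  proof -
    have "{1..N - r} \<union> {N - r + 1..N} = {1..N}" "N - r + r = N" using lrN by auto
    then show ?thesis
      by (simp add: pair_trace_def Yop_def prodX_split[of "{1..N - r}" "{N - r + 1..N}"])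
  qed
  have "?T (l + j) = ?T l" if "l + j \<le> N - r" for j
    using that
  proof (induction j)
    case (Suc j)
    have "?T (Suc (l + j)) = ?T (l + j)"
      using pair_trace_step[OF _ _ inv, where k = "Suc (l + j)"] Suc.prems by simp
    then show ?case using Suc by simp
  qed simp
  from this[of "N - r - l"] top lrN show ?thesis by simp
qed


section \<open>Reconstruction from the block reductions\<close>

definition same_block_reductions :: "nat \<Rightarrow> nat \<Rightarrow> nat \<Rightarrow> op \<Rightarrow> op \<Rightarrow> bool" where
  "same_block_reductions d N R O1 O2 \<longleftrightarrow>
     (\<forall>k\<in>{1..N - R + 1}. ptr d {1..N} ({1..N} - {k..k + R - 1}) O1
                        = ptr d {1..N} ({1..N} - {k..k + R - 1}) O2)"

lemma Emap_eq_of_same_block_reductions: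
  assumes same: "same_block_reductions d N R O1 O2"
    and k: "1 \<le> k" "k + R - 1 \<le> N" and IB: "I \<subseteq> {k..k + R - 1}" and JB: "J \<subseteq> {k..k + R - 1}"
  shows "Emap d N O1 I J = Emap d N O2 I J"
proof -
  have BS: "{k..k + R - 1} \<subseteq> {1..N}" using k by auto
  have "ptr d {1..N} ({1..N} - {k..k + R - 1}) O1 = ptr d {1..N} ({1..N} - {k..k + R - 1}) O2"
    using same k unfolding same_block_reductions_def by auto
  then show ?thesis by (intro ext) (simp only: Emap_block_local[OF IB JB BS])
qed

text \<open>The recursion for Y_k only involves the maps E on the blocks k-l..k+r.\<close>

lemma Yseq_eq_of_same_block_reductions:
  assumes same: "same_block_reductions d N (l + r + 1) O1 O2" and lrN: "l + r + 1 \<le> N"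
  shows "j \<le> N - r - l \<Longrightarrow> Yseq d N O1 l r X j = Yseq d N O2 l r X j"
proof (induction j)
  case (Suc j)
  define k where "k = N - r - j"
  have kl: "l + 1 \<le> k" and kN: "k + r \<le> N" using Suc.prems lrN by (auto simp: k_def)
  have block: "k - l \<ge> 1" "k - l + (l + r + 1) - 1 = k + r" using kl by auto
  have "Emap d N O1 {k - l..k - 1} J = Emap d N O2 {k - l..k - 1} J" if "J \<subseteq> {k..k + r}" for J
  proof (rule Emap_eq_of_same_block_reductions[OF same block(1)])
    show "J \<subseteq> {k - l..k - l + (l + r + 1) - 1}" using that block(2) by auto
  qed (use kN block in auto)
  moreover have "{k..k + r - 1} \<subseteq> {k..k + r}" by auto
  ultimately have E: "Emap d N O1 {k - l..k - 1} {k..k + r - 1} = Emap d N O2 {k - l..k - 1} {k..k + r - 1}"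
    "Emap d N O1 {k - l..k - 1} {k..k + r} = Emap d N O2 {k - l..k - 1} {k..k + r}"
    by blast+
  have IH: "Yseq d N O1 l r X j = Yseq d N O2 l r X j" using Suc by simp
  show ?case unfolding Yseq.simps Let_def k_def[symmetric] IH E ..
qed simp

lemma pair_trace_eq_of_same_block_reductions:
  assumes same: "same_block_reductions d N (l + r + 1) O1 O2" and lrN: "l + r + 1 \<le> N"
  shows "pair_trace d N O1 {1..l} P {l + 1..l + r} (Yop d N O1 l r X l)
       = pair_trace d N O2 {1..l} P {l + 1..l + r} (Yop d N O2 l r X l)"
proof -
  have "Yop d N O1 l r X l = Yop d N O2 l r X l"
    unfolding Yop_def using Yseq_eq_of_same_block_reductions[OF same lrN] by simp
  moreover have "Emap d N O1 {1..l} {l + 1..l + r} = Emap d N O2 {1..l} {l + 1..l + r}"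
    using lrN by (intro Emap_eq_of_same_block_reductions[OF same, of 1]) auto
  moreover have "{1..l} \<subseteq> {1..N}" using lrN by auto
  ultimately show ?thesis by (simp add: pair_trace_Emap)
qed

lemma optr_mat_unit:
  assumes fS: "finite S" and a: "a \<in> cfgs d S" and b: "b \<in> cfgs d S"
  shows "optr d S (opmul d S (mat_unit b a) M) = M a b"
proof -
  have fc: "finite (cfgs d S)" using fS by (rule finite_cfgs)
  have "optr d S (opmul d S (mat_unit b a) M) = (\<Sum>s\<in>cfgs d S. if s = b then M a s else 0)"
    unfolding optr_def opmul_def mat_unit_def
    by (intro sum.cong refl) (auto simp: sum_single_term[OF fc a])
  also have "\<dots> = M a b" using fc b by simp
  finally show ?thesis .
qed

lemma prodX_mat_unit:
  assumes fS: "finite S" and a: "a \<in> cfgs d S" and b: "b \<in> cfgs d S"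
  shows "prodX d S (\<lambda>i. mat_unit (restr {i} b) (restr {i} a)) = mat_unit b a"
proof (intro ext)
  fix s t
  show "prodX d S (\<lambda>i. mat_unit (restr {i} b) (restr {i} a)) s t = mat_unit b a s t"
  proof (cases "s \<in> cfgs d S \<and> t \<in> cfgs d S")
    case True
    have "(\<forall>i\<in>S. restr {i} s = restr {i} b \<and> restr {i} t = restr {i} a) \<longleftrightarrow> s = b \<and> t = a"
    proof
      assume "\<forall>i\<in>S. restr {i} s = restr {i} b \<and> restr {i} t = restr {i} a"
      then have "\<forall>i\<in>S. s i = b i \<and> t i = a i" by (metis restr_def singletonI)
      then show "s = b \<and> t = a" using True a b cfgs_eqI by metis
    qed auto
    moreover have "(\<Prod>i\<in>S. if P i then 1 else 0 :: complex) = (if \<forall>i\<in>S. P i then 1 else 0)"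
      for P
      using fS by (cases "\<forall>i\<in>S. P i") (auto simp: prod_zero_iff)
    ultimately show ?thesis
      using True by (simp add: prodX_def mat_unit_def)
  qed (use a b in \<open>auto simp: prodX_def mat_unit_def\<close>)
qed

lemma op_eq_of_product_traces:
  assumes fS: "finite S" and O1: "O1 \<in> opsp d S" and O2: "O2 \<in> opsp d S"
    and traces: "\<And>X. optr d S (opmul d S (prodX d S X) O1) = optr d S (opmul d S (prodX d S X) O2)"
  shows "O1 = O2"
proof (intro ext)
  fix a b
  show "O1 a b = O2 a b"
  proof (cases "a \<in> cfgs d S \<and> b \<in> cfgs d S")
    case True
    then show ?thesis
      using traces[of "\<lambda>i. mat_unit (restr {i} b) (restr {i} a)"]
      by (simp add: prodX_mat_unit optr_mat_unit fS)
  qed (use O1 O2 in \<open>auto simp: opsp_def\<close>)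
qed


text \<open>Second half of the theorem: two (l,r)-invertible operators with the same reductions
  to all blocks of l + r + 1 contiguous sites coincide, since by the telescoping identity
  their traces against all product operators agree.\<close>

lemma lr_invertible_eq_of_same_block_reductions:
  assumes lrN: "l + r + 1 \<le> N" and O1: "O1 \<in> opsp d {1..N}" and O2: "O2 \<in> opsp d {1..N}"
    and inv1: "lr_invertible d N O1 l r" and inv2: "lr_invertible d N O2 l r"
    and same: "same_block_reductions d N (l + r + 1) O1 O2"
  shows "O1 = O2"
proof (rule op_eq_of_product_traces[OF finite_atLeastAtMost O1 O2])
  fix X
  have "l + r \<le> N" using lrN by simp
  then show "optr d {1..N} (opmul d {1..N} (prodX d {1..N} X) O1)
      = optr d {1..N} (opmul d {1..N} (prodX d {1..N} X) O2)"
    using trace_telescoping[OF _ inv1] trace_telescoping[OF _ inv2]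
      pair_trace_eq_of_same_block_reductions[OF same lrN] by simp
qed


theorem theorem1:
  fixes d N l r :: nat and Oh :: op and X :: "nat \<Rightarrow> op"
  assumes "N \<ge> 4" and "l > 0" and "r > 0" and "2 \<le> l + r" and "l + r \<le> N - 2"
    and "Oh \<in> opsp d {1..N}"
    and "lr_invertible d N Oh l r"
    and "\<forall>i\<in>{1..N}. X i \<in> opsp d {i}"
  shows "optr d {1..N} (opmul d {1..N} (prodX d {1..N} X) Oh)
         = optr d {1..N}
             (opmul d {1..N}
                (opmul d {1..N} (emb d {1..l} {1..N} (prodX d {1..l} X))
                                (emb d {l + 1..l + r} {1..N} (Yop d N Oh l r X l)))
                Oh)
         \<and> (\<forall>Oh'. Oh' \<in> opsp d {1..N} \<and> lr_invertible d N Oh' l r \<and>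
           (\<forall>k\<in>{1..N - (l + r + 1) + 1}.
              ptr d {1..N} ({1..N} - {k..k + (l + r + 1) - 1}) Oh'
              = ptr d {1..N} ({1..N} - {k..k + (l + r + 1) - 1}) Oh)
           \<longrightarrow> Oh' = Oh)"
proof -
  have lrN: "l + r + 1 \<le> N" using assms(1,5) by auto
  then have "l + r \<le> N" by simp
  note trace = trace_telescoping[OF this assms(7), of X]
  have unique: "Oh' = Oh" if "Oh' \<in> opsp d {1..N}" "lr_invertible d N Oh' l r"
    "same_block_reductions d N (l + r + 1) Oh' Oh" for Oh'
    using lr_invertible_eq_of_same_block_reductions[OF lrN that(1) assms(6) that(2) assms(7) that(3)] .
  show ?thesis
    using trace unique unfolding pair_trace_def same_block_reductions_def by blast
qed

end
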